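(* Let $K$ be a perfect field, $k\subset K$ a subfield, $\lambda\in\operatorname{Emb}(K)$ with $|\lambda^G|=n<\infty$, and let $K^n_\phi$ be the simple two-sided vector space corresponding to $\lambda$. Let $\phi^T:K\to M_n(K)$ be $x\mapsto\phi(x)^T$. Then $K^n_{\phi^T}\cong K^n_\phi$ as two-sided vector spaces.
   Context: Let $\overline{K}$ be a fixed algebraic closure of $K$. A two-sided vector space is a $K\otimes_k K$-module. $\operatorname{Emb}(K)$ is the set of $k$-linear field embeddings $K\to\overline{K}$; $G=\operatorname{Aut}(\overline{K}/K)$ acts by left composition, with orbits $\lambda^G$. $K(\lambda)$ is the composite of $K$ and $\lambda(K)$ in $\overline{K}$. For a homomorphism $\phi:K\to M_n(K)$, $K^n_\phi$ denotes the row vectors $K^n$ with left action by scalar multiplication and right action $v\cdot x=v\phi(x)$. The simple two-sided vector space corresponding to $\lambda$ is $K^n_\phi$ with $\phi$ defined as follows: $\alpha_1,\dots,\alpha_n$ is a basis of $K(\lambda)$ over $K$, $\lambda_i:K\to K$ are defined by $\lambda(x)=\sum_i\lambda_i(x)\alpha_i$, $\beta_{ijk}\in K$ by $\alpha_i\alpha_j=\sum_k\beta_{ijk}\alpha_k$, and $\phi_{ij}(x)=\sum_k\beta_{jki}\lambda_k(x)$. *)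

theory Defs
  imports "Jordan_Normal_Form.Matrix" "HOL-Computational_Algebra.Polynomial"
begin

definition field_hom :: "('a::field \<Rightarrow> 'b::field) \<Rightarrow> bool" where
  "field_hom f \<longleftrightarrow> f 0 = 0 \<and> f 1 = 1 \<and> (\<forall>x y. f (x + y) = f x + f y) \<and> (\<forall>x y. f (x * y) = f x * f y)"

definition is_subfield :: "'a::field set \<Rightarrow> bool" where
  "is_subfield F \<longleftrightarrow> 0 \<in> F \<and> 1 \<in> F \<and> (\<forall>x\<in>F. \<forall>y\<in>F. x + y \<in> F \<and> x * y \<in> F)
     \<and> (\<forall>x\<in>F. - x \<in> F \<and> inverse x \<in> F)"

definition perfect_field :: "'a::field itself \<Rightarrow> bool" where
  "perfect_field T \<longleftrightarrow> CHAR('a) = 0 \<or> (\<forall>x::'a. \<exists>y. y ^ CHAR('a) = x)"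

definition alg_closure :: "('a::field \<Rightarrow> 'b::field) \<Rightarrow> bool" where
  "alg_closure \<iota> \<longleftrightarrow> field_hom \<iota>
     \<and> (\<forall>p::'b poly. degree p > 0 \<longrightarrow> (\<exists>z. poly p z = 0))
     \<and> (\<forall>b. \<exists>p::'a poly. p \<noteq> 0 \<and> poly (map_poly \<iota> p) b = 0)"

definition Emb :: "'a::field set \<Rightarrow> ('a \<Rightarrow> 'b::field) \<Rightarrow> ('a \<Rightarrow> 'b) set" where
  "Emb k \<iota> = {l. field_hom l \<and> (\<forall>c\<in>k. \<forall>x. l (c * x) = \<iota> c * l x)}"

definition Gal :: "('a::field \<Rightarrow> 'b::field) \<Rightarrow> ('b \<Rightarrow> 'b) set" where
  "Gal \<iota> = {\<sigma>. field_hom \<sigma> \<and> bij \<sigma> \<and> (\<forall>a. \<sigma> (\<iota> a) = \<iota> a)}"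

definition orbit :: "('a::field \<Rightarrow> 'b::field) \<Rightarrow> ('a \<Rightarrow> 'b) \<Rightarrow> ('a \<Rightarrow> 'b) set" where
  "orbit \<iota> l = (\<lambda>\<sigma>. \<sigma> \<circ> l) ` Gal \<iota>"

definition composite :: "('a::field \<Rightarrow> 'b::field) \<Rightarrow> ('a \<Rightarrow> 'b) \<Rightarrow> 'b set" where
  "composite \<iota> l = \<Inter>{F. is_subfield F \<and> range \<iota> \<subseteq> F \<and> range l \<subseteq> F}"

definition is_basis :: "('a::field \<Rightarrow> 'b::field) \<Rightarrow> 'b set \<Rightarrow> nat \<Rightarrow> (nat \<Rightarrow> 'b) \<Rightarrow> bool" where
  "is_basis \<iota> F n \<alpha> \<longleftrightarrow>
     (\<forall>c. (\<Sum>i<n. \<iota> (c i) * \<alpha> i) = 0 \<longrightarrow> (\<forall>i<n. c i = 0))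
     \<and> F = {\<Sum>i<n. \<iota> (c i) * \<alpha> i | c. True}"

definition phi_mat :: "nat \<Rightarrow> (nat \<Rightarrow> nat \<Rightarrow> nat \<Rightarrow> 'a::field) \<Rightarrow> (nat \<Rightarrow> 'a \<Rightarrow> 'a) \<Rightarrow> 'a \<Rightarrow> 'a mat" where
  "phi_mat n \<beta> lc x = mat n n (\<lambda>(i, j). \<Sum>k<n. \<beta> j k i * lc k x)"

definition ract :: "'a::comm_ring_1 vec \<Rightarrow> 'a mat \<Rightarrow> 'a vec" where
  "ract v A = vec (dim_col A) (\<lambda>j. \<Sum>i<dim_vec v. v $ i * A $$ (i, j))"

text \<open>Isomorphism of two-sided vector spaces K^n_phi -> K^n_psi (left: scalars, right: v.x = v phi(x)).\<close>
definition tsv_iso :: "nat \<Rightarrow> ('a::field \<Rightarrow> 'a mat) \<Rightarrow> ('a \<Rightarrow> 'a mat) \<Rightarrow> ('a vec \<Rightarrow> 'a vec) \<Rightarrow> bool" where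
  "tsv_iso n \<phi> \<psi> f \<longleftrightarrow> bij_betw f (carrier_vec n) (carrier_vec n)
     \<and> (\<forall>v\<in>carrier_vec n. \<forall>w\<in>carrier_vec n. f (v + w) = f v + f w)
     \<and> (\<forall>c. \<forall>v\<in>carrier_vec n. f (c \<cdot>\<^sub>v v) = c \<cdot>\<^sub>v f v)
     \<and> (\<forall>x. \<forall>v\<in>carrier_vec n. f (ract v (\<phi> x)) = ract (f v) (\<psi> x))"

definition tsv_isomorphic :: "nat \<Rightarrow> ('a::field \<Rightarrow> 'a mat) \<Rightarrow> ('a \<Rightarrow> 'a mat) \<Rightarrow> bool" where
  "tsv_isomorphic n \<phi> \<psi> \<longleftrightarrow> (\<exists>f. tsv_iso n \<phi> \<psi> f)"

end

theory Submission imports Defs "Jordan_Normal_Form.Determinant" begin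

text \<open>
  Write \<open>F = K(\<lambda>)\<close> with basis \<open>\<alpha>\<close> and structure constants \<open>\<beta>\<close>; then \<open>\<phi>(x)\<close> is the
  matrix of multiplication by the element with coordinates \<open>lc _ x\<close>. The bilinear form
  "\<open>\<alpha>\<^sub>0\<close>-coordinate of \<open>u v\<close>" on \<open>F\<close> is symmetric and associative, so every
  multiplication operator is self-adjoint for it: its Gram matrix \<open>M\<close> satisfies
  \<open>M \<phi>(x) = \<phi>(x)\<^sup>T M\<close>. It is nondegenerate because \<open>F\<close> is a field (\<open>u \<noteq> 0\<close> pairs to \<open>1\<close>
  with \<open>\<alpha>\<^sub>0 / u\<close>), so \<open>v \<mapsto> M v\<close> is the required isomorphism. Only the basis and the
  multiplication table enter.
\<close>

lemma field_hom_sum: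
  assumes "field_hom \<iota>" shows "\<iota> (sum g A) = (\<Sum>a\<in>A. \<iota> (g a))"
proof (cases "finite A")
  case True then show ?thesis
    by (induction A rule: finite_induct) (use assms in \<open>auto simp: field_hom_def\<close>)
qed (use assms in \<open>simp add: field_hom_def\<close>)

lemma field_hom_diff:
  assumes "field_hom \<iota>" shows "\<iota> (a - b) = \<iota> a - \<iota> b"
proof -
  have "\<iota> (a - b) + \<iota> b = \<iota> a" using assms unfolding field_hom_def by (metis diff_add_cancel)
  then show ?thesis by (simp add: eq_diff_eq)
qed

lemma is_subfield_Inter: "\<forall>F\<in>S. is_subfield F \<Longrightarrow> is_subfield (\<Inter>S)"
  unfolding is_subfield_def by blast

lemma is_subfield_composite: "is_subfield (composite \<iota> l)"
  unfolding composite_def by (rule is_subfield_Inter) blast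

lemma ract_eq_transpose_mult_mat_vec:
  assumes "v \<in> carrier_vec (dim_row A)"
  shows "ract v A = transpose_mat A *\<^sub>v v"
  using assms by (intro eq_vecI) (auto simp: ract_def scalar_prod_def atLeast0LessThan ac_simps)

lemma tsv_isomorphic_transpose:
  assumes M: "M \<in> carrier_mat n n" and det: "det M \<noteq> 0"
    and \<phi>: "\<And>x. \<phi> x \<in> carrier_mat n n"
    and self_adjoint: "\<And>x. M * \<phi> x = transpose_mat (\<phi> x) * M"
  shows "tsv_isomorphic n (\<lambda>x. transpose_mat (\<phi> x)) \<phi>"
proof -
  from det_non_zero_imp_unit[OF M det, of "()"] obtain M' where
    M': "M' \<in> carrier_mat n n" "M' * M = 1\<^sub>m n" "M * M' = 1\<^sub>m n"
    unfolding Units_def ring_mat_def by auto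
  have "tsv_iso n (\<lambda>x. transpose_mat (\<phi> x)) \<phi> (\<lambda>v. M *\<^sub>v v)"
    unfolding tsv_iso_def
  proof (intro conjI ballI allI)
    show "bij_betw (\<lambda>v. M *\<^sub>v v) (carrier_vec n) (carrier_vec n)"
      by (rule bij_betwI[where g = "\<lambda>w. M' *\<^sub>v w"])
        (use M M' in \<open>auto simp: assoc_mult_mat_vec[symmetric]\<close>)
    show "M *\<^sub>v (ract v (transpose_mat (\<phi> x))) = ract (M *\<^sub>v v) (\<phi> x)"
      if "v \<in> carrier_vec n" for x v
    proof -
      have "M *\<^sub>v (ract v (transpose_mat (\<phi> x))) = (M * \<phi> x) *\<^sub>v v"
        using that M \<phi>[of x] by (simp add: ract_eq_transpose_mult_mat_vec)
      also have "\<dots> = ract (M *\<^sub>v v) (\<phi> x)"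
        using that M \<phi>[of x]
        by (simp add: self_adjoint ract_eq_transpose_mult_mat_vec assoc_mult_mat_vec)
      finally show ?thesis .
    qed
  qed (use M in \<open>auto simp: mult_add_distrib_mat_vec mult_mat_vec\<close>)
  then show ?thesis unfolding tsv_isomorphic_def by blast
qed

text \<open>Coefficient vectors are functions \<open>nat \<Rightarrow> 'K\<close>, of which only the values below \<open>n\<close> matter.\<close>
locale structure_constants =
  fixes \<iota> :: "'K::field \<Rightarrow> 'L::field" and n :: nat and \<alpha> :: "nat \<Rightarrow> 'L"
    and \<beta> :: "nat \<Rightarrow> nat \<Rightarrow> nat \<Rightarrow> 'K"
  assumes hom: "field_hom \<iota>"
    and indep: "\<forall>c. (\<Sum>i<n. \<iota> (c i) * \<alpha> i) = 0 \<longrightarrow> (\<forall>i<n. c i = 0)"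
    and mult_table: "\<forall>i<n. \<forall>j<n. \<alpha> i * \<alpha> j = (\<Sum>m<n. \<iota> (\<beta> i j m) * \<alpha> m)"
begin

definition lincomb :: "(nat \<Rightarrow> 'K) \<Rightarrow> 'L" where
  "lincomb c = (\<Sum>i<n. \<iota> (c i) * \<alpha> i)"

definition coord0_form :: "(nat \<Rightarrow> 'K) \<Rightarrow> (nat \<Rightarrow> 'K) \<Rightarrow> 'K" where
  "coord0_form c d = (\<Sum>i<n. \<Sum>j<n. c i * d j * \<beta> i j 0)"

definition gram_mat :: "'K mat" where
  "gram_mat = mat n n (\<lambda>(i, j). \<beta> j i 0)"

lemma lincomb_inject:
  assumes "lincomb c = lincomb d" and "i < n"
  shows "c i = d i"
proof -
  have "(\<Sum>i<n. \<iota> (c i - d i) * \<alpha> i) = 0"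
    using assms(1) by (simp add: lincomb_def field_hom_diff[OF hom] left_diff_distrib sum_subtractf)
  then show ?thesis using indep assms(2) by auto
qed

lemma lincomb_cong: "(\<And>i. i < n \<Longrightarrow> c i = d i) \<Longrightarrow> lincomb c = lincomb d"
  unfolding lincomb_def by (rule sum.cong) auto

lemma lincomb_indicator: "j < n \<Longrightarrow> lincomb (\<lambda>i. of_bool (i = j)) = \<alpha> j"
  using hom by (simp add: lincomb_def field_hom_def of_bool_def if_distrib if_distribR cong: if_cong)

lemma lincomb_mult:
  "lincomb c * lincomb d = lincomb (\<lambda>m. \<Sum>i<n. \<Sum>j<n. c i * d j * \<beta> i j m)"
proof -
  have hom_mult: "\<And>a b. \<iota> (a * b) = \<iota> a * \<iota> b" using hom by (simp add: field_hom_def)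
  have "lincomb c * lincomb d = (\<Sum>i<n. \<Sum>j<n. \<iota> (c i) * \<iota> (d j) * (\<alpha> i * \<alpha> j))"
    unfolding lincomb_def sum_distrib_left sum_distrib_right by (subst sum.swap) (simp add: ac_simps)
  also have "\<dots> = (\<Sum>i<n. \<Sum>j<n. \<Sum>m<n. \<iota> (c i) * \<iota> (d j) * \<iota> (\<beta> i j m) * \<alpha> m)"
    by (intro sum.cong refl) (simp add: mult_table sum_distrib_left ac_simps)
  also have "\<dots> = (\<Sum>m<n. \<Sum>i<n. \<Sum>j<n. \<iota> (c i) * \<iota> (d j) * \<iota> (\<beta> i j m) * \<alpha> m)"
    by (subst sum.swap, subst (2) sum.swap) simp
  also have "\<dots> = lincomb (\<lambda>m. \<Sum>i<n. \<Sum>j<n. c i * d j * \<beta> i j m)"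
    unfolding lincomb_def field_hom_sum[OF hom] hom_mult sum_distrib_right by simp
  finally show ?thesis .
qed

lemma coord0_form_eq:
  assumes "lincomb c * lincomb d = lincomb g" and "0 < n"
  shows "coord0_form c d = g 0"
  using lincomb_inject[OF trans[OF lincomb_mult[symmetric] assms(1)] assms(2)]
  by (simp add: coord0_form_def)

lemma coord0_form_cong:
  assumes "lincomb c * lincomb d = lincomb c' * lincomb d'" and "0 < n"
  shows "coord0_form c d = coord0_form c' d'"
  using coord0_form_eq[OF lincomb_mult assms(2), of c' d']
    coord0_form_eq[OF trans[OF assms(1) lincomb_mult] assms(2)] by simp

lemma coord0_form_indicator_left:
  "j < n \<Longrightarrow> coord0_form (\<lambda>i. of_bool (i = j)) d = (\<Sum>l<n. d l * \<beta> j l 0)"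
  by (simp add: coord0_form_def mult.assoc flip: sum_distrib_left)

lemma coord0_form_indicator_right:
  "j < n \<Longrightarrow> coord0_form c (\<lambda>l. of_bool (l = j)) = (\<Sum>i<n. c i * \<beta> i j 0)"
  by (simp add: coord0_form_def of_bool_def if_distrib if_distribR cong: if_cong)

lemma basis_mult_lincomb:
  assumes "j < n"
  shows "\<alpha> j * lincomb c = lincomb (\<lambda>i. \<Sum>k<n. c k * \<beta> j k i)"
proof -
  have "\<alpha> j * lincomb c = lincomb (\<lambda>m. \<Sum>i<n. \<Sum>k<n. of_bool (i = j) * c k * \<beta> i k m)"
    using lincomb_mult lincomb_indicator[OF assms] by metis
  also have "\<dots> = lincomb (\<lambda>i. \<Sum>k<n. c k * \<beta> j k i)"
    using assms by (simp add: mult.assoc flip: sum_distrib_left)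
  finally show ?thesis .
qed

lemma gram_mat_carrier: "gram_mat \<in> carrier_mat n n"
  by (simp add: gram_mat_def)

lemma phi_mat_carrier: "phi_mat n \<beta> lc x \<in> carrier_mat n n"
  by (simp add: phi_mat_def)

lemma gram_mat_self_adjoint:
  "gram_mat * phi_mat n \<beta> lc x = transpose_mat (phi_mat n \<beta> lc x) * gram_mat"
proof (rule eq_matI)
  let ?\<phi> = "phi_mat n \<beta> lc x"
  let ?col = "\<lambda>j i. ?\<phi> $$ (i, j)"
  let ?e = "\<lambda>j i. of_bool (i = j) :: 'K"
  have col: "\<alpha> j * lincomb (\<lambda>k. lc k x) = lincomb (?col j)" if "j < n" for j
    unfolding basis_mult_lincomb[OF that] by (rule lincomb_cong) (simp add: that phi_mat_def ac_simps)
  fix j k assume "j < dim_row (transpose_mat ?\<phi> * gram_mat)" "k < dim_col (transpose_mat ?\<phi> * gram_mat)"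
  then have jk: "j < n" "k < n" using gram_mat_carrier phi_mat_carrier[of lc x] by auto
  have "(gram_mat * ?\<phi>) $$ (j, k) = (\<Sum>i<n. ?col k i * \<beta> i j 0)"
    using jk gram_mat_carrier phi_mat_carrier[of lc x]
    by (simp add: scalar_prod_def atLeast0LessThan gram_mat_def mult.commute)
  also have "\<dots> = coord0_form (?col k) (?e j)"
    using jk(1) by (rule coord0_form_indicator_right[symmetric])
  also have "\<dots> = coord0_form (?e k) (?col j)"
    by (rule coord0_form_cong)
      (use jk in \<open>simp_all add: col[symmetric] lincomb_indicator ac_simps\<close>)
  also have "\<dots> = (\<Sum>i<n. ?col j i * \<beta> k i 0)"
    using jk(2) by (rule coord0_form_indicator_left)
  also have "\<dots> = (transpose_mat ?\<phi> * gram_mat) $$ (j, k)"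
    using jk gram_mat_carrier phi_mat_carrier[of lc x]
    by (simp add: scalar_prod_def atLeast0LessThan gram_mat_def)
  finally show "(gram_mat * ?\<phi>) $$ (j, k) = (transpose_mat ?\<phi> * gram_mat) $$ (j, k)" .
qed (use gram_mat_carrier phi_mat_carrier[of lc x] in auto)

lemma coord0_form_gram_mat:
  assumes "v \<in> carrier_vec n"
  shows "coord0_form (\<lambda>i. v $ i) d = (\<Sum>j<n. d j * (gram_mat *\<^sub>v v) $ j)"
proof -
  have "(gram_mat *\<^sub>v v) $ j = (\<Sum>i<n. \<beta> i j 0 * v $ i)" if "j < n" for j
    using that assms by (simp add: gram_mat_def scalar_prod_def atLeast0LessThan)
  then have "(\<Sum>j<n. d j * (gram_mat *\<^sub>v v) $ j) = (\<Sum>j<n. \<Sum>i<n. v $ i * d j * \<beta> i j 0)"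
    by (simp add: sum_distrib_left ac_simps)
  also have "\<dots> = coord0_form (\<lambda>i. v $ i) d"
    unfolding coord0_form_def by (rule sum.swap)
  finally show ?thesis by simp
qed

lemma det_gram_mat_nonzero:
  assumes field: "is_subfield (range lincomb)"
  shows "det gram_mat \<noteq> 0"
proof
  assume "det gram_mat = 0"
  then obtain v where v: "v \<in> carrier_vec n" "v \<noteq> 0\<^sub>v n" "gram_mat *\<^sub>v v = 0\<^sub>v n"
    using det_0_iff_vec_prod_zero[of gram_mat n] by (auto simp: gram_mat_def)
  have n: "0 < n" using v(1,2) by (cases n) (auto intro!: eq_vecI)
  have "lincomb (\<lambda>i. v $ i) \<noteq> 0"
  proof
    assume "lincomb (\<lambda>i. v $ i) = 0"
    then have "\<forall>i<n. v $ i = 0" using indep unfolding lincomb_def by blast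
    with v(1,2) show False by (auto intro!: eq_vecI)
  qed
  moreover have "\<alpha> 0 \<in> range lincomb" using lincomb_indicator[OF n] by (metis rangeI)
  ultimately have "\<alpha> 0 * inverse (lincomb (\<lambda>i. v $ i)) \<in> range lincomb"
    using field unfolding is_subfield_def by blast
  then obtain d where "lincomb (\<lambda>i. v $ i) * lincomb d = lincomb (\<lambda>i. of_bool (i = 0))"
    using lincomb_indicator[OF n] \<open>lincomb (\<lambda>i. v $ i) \<noteq> 0\<close> by (auto simp: field_simps)
  from coord0_form_eq[OF this n] have "coord0_form (\<lambda>i. v $ i) d = 1" by simp
  moreover have "coord0_form (\<lambda>i. v $ i) d = 0" using coord0_form_gram_mat[OF v(1)] v(3) by simp
  ultimately show False by simp
qed

end

theorem lemma2p2:
  fixes \<iota> :: "'K::field \<Rightarrow> 'L::field" and k :: "'K set" and lam :: "'K \<Rightarrow> 'L"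
    and n :: nat and \<alpha> :: "nat \<Rightarrow> 'L" and lc :: "nat \<Rightarrow> 'K \<Rightarrow> 'K"
    and \<beta> :: "nat \<Rightarrow> nat \<Rightarrow> nat \<Rightarrow> 'K"
  assumes "perfect_field TYPE('K)"
    and "alg_closure \<iota>"
    and "is_subfield k"
    and "lam \<in> Emb k \<iota>"
    and "finite (orbit \<iota> lam)" and "card (orbit \<iota> lam) = n"
    and "is_basis \<iota> (composite \<iota> lam) n \<alpha>"
    and "\<forall>x. lam x = (\<Sum>i<n. \<iota> (lc i x) * \<alpha> i)"
    and "\<forall>i<n. \<forall>j<n. \<alpha> i * \<alpha> j = (\<Sum>m<n. \<iota> (\<beta> i j m) * \<alpha> m)"
  shows "tsv_isomorphic n (\<lambda>x. transpose_mat (phi_mat n \<beta> lc x)) (phi_mat n \<beta> lc)"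
proof -
  have basis: "\<forall>c. (\<Sum>i<n. \<iota> (c i) * \<alpha> i) = 0 \<longrightarrow> (\<forall>i<n. c i = 0)"
    "composite \<iota> lam = {\<Sum>i<n. \<iota> (c i) * \<alpha> i | c. True}"
    using assms(7) unfolding is_basis_def by blast+
  interpret structure_constants \<iota> n \<alpha> \<beta>
    using assms(2,9) basis(1) by unfold_locales (simp_all add: alg_closure_def)
  have "range lincomb = composite \<iota> lam"
    unfolding basis(2) lincomb_def by blast
  then have "det gram_mat \<noteq> 0"
    using is_subfield_composite[of \<iota> lam] by (intro det_gram_mat_nonzero) simp
  then show ?thesis
    by (intro tsv_isomorphic_transpose[OF gram_mat_carrier] phi_mat_carrier gram_mat_self_adjoint)
qed

end
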